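(* Let $Q=((A,V);B;\alpha)$ be as in the context and $\varphi$ any scale function. (1) Every $x\in A\hat\otimes_\alpha B$ can be written as $x=x_1+x_2$ with $x_1,x_2\in\mathfrak B_\varphi(Q)$. (2) Suppose moreover that $A$ and $B$ are unital Banach algebras and $A\hat\otimes_\alpha B$ is a Banach algebra with multiplication determined by $(a_1\otimes b_1)(a_2\otimes b_2)=(a_1a_2)\otimes(b_1b_2)$. Then every invertible $x\in(A\hat\otimes_\alpha B)^{-1}$ can be written as $x=x_1x_2$ where $x_1,x_2$ are invertible and $x_1,x_1^{-1},x_2,x_2^{-1}\in\mathfrak B_\varphi(Q)$.
   Context: $\mathbb F\in\{\mathbb R,\mathbb C\}$. $A$ is an infinite-dimensional separable Banach space over $\mathbb F$ and $V_0\subsetneq V_1\subsetneq\cdots\subset A$ are finite-dimensional subspaces whose union $V$ is dense in $A$. $B$ is a Banach space over $\mathbb F$, $\alpha$ a reasonable crossnorm on $A\otimes B$, $A\hat\otimes_\alpha B$ the completion. $E_n(x):=\inf_{h\in V_n\otimes B}\|x-h\|_{A\hat\otimes_\alpha B}$. A scale function is a nonincreasing $\varphi:\mathbb N\to(0,\infty)$ with $\varphi(n)\to0$. $\mathfrak B_\varphi(Q)=\{x:\liminf_{n\to\infty}(E_n(x))^{\varphi(n)}<1\}$. *)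

theory Defs
  imports "HOL-Analysis.Analysis"
begin

definition scalars_R_or_C :: "'k::real_normed_field itself \<Rightarrow> bool" where
  "scalars_R_or_C _ \<longleftrightarrow>
     (\<forall>c::'k. \<exists>a. c = of_real a) \<or>
     (\<exists>i::'k. i * i = -1 \<and> (\<forall>c::'k. \<exists>a b. c = of_real a + of_real b * i))"

text \<open>A normed space over the scalar field 'k, given by the scalar multiplication sc
  (compatible with the real structure of the type).\<close>
definition F_space :: "('k::real_normed_field \<Rightarrow> 'a::real_normed_vector \<Rightarrow> 'a) \<Rightarrow> bool" where
  "F_space sc \<longleftrightarrow>
     (\<forall>r x. sc (of_real r) x = r *\<^sub>R x) \<and>
     (\<forall>c d x. sc c (sc d x) = sc (c * d) x) \<and>
     (\<forall>c x y. sc c (x + y) = sc c x + sc c y) \<and>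
     (\<forall>c d x. sc (c + d) x = sc c x + sc d x) \<and>
     (\<forall>c x. norm (sc c x) = norm c * norm x)"

definition F_linear :: "('k \<Rightarrow> 'a \<Rightarrow> 'a) \<Rightarrow> ('k \<Rightarrow> 'b \<Rightarrow> 'b) \<Rightarrow> ('a::plus \<Rightarrow> 'b::plus) \<Rightarrow> bool" where
  "F_linear sc1 sc2 f \<longleftrightarrow> (\<forall>x y. f (x + y) = f x + f y) \<and> (\<forall>c x. f (sc1 c x) = sc2 c (f x))"

definition F_functional :: "('k::real_normed_field \<Rightarrow> 'a::real_normed_vector \<Rightarrow> 'a) \<Rightarrow> ('a \<Rightarrow> 'k) \<Rightarrow> real \<Rightarrow> bool" where
  "F_functional sc f K \<longleftrightarrow> F_linear sc (\<lambda>c y. c * y) f \<and> (\<forall>x. norm (f x) \<le> K * norm x)"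

definition F_span :: "('k \<Rightarrow> 'a \<Rightarrow> 'a) \<Rightarrow> 'a::comm_monoid_add set \<Rightarrow> 'a set" where
  "F_span sc S = {(\<Sum>s\<in>T. sc (c s) s) | T c. finite T \<and> T \<subseteq> S}"

definition F_subspace :: "('k \<Rightarrow> 'a \<Rightarrow> 'a) \<Rightarrow> 'a::comm_monoid_add set \<Rightarrow> bool" where
  "F_subspace sc U \<longleftrightarrow> 0 \<in> U \<and> (\<forall>x\<in>U. \<forall>y\<in>U. x + y \<in> U) \<and> (\<forall>c. \<forall>x\<in>U. sc c x \<in> U)"

definition F_finite_dim :: "('k \<Rightarrow> 'a \<Rightarrow> 'a) \<Rightarrow> 'a::comm_monoid_add set \<Rightarrow> bool" where
  "F_finite_dim sc U \<longleftrightarrow> (\<exists>S. finite S \<and> S \<subseteq> U \<and> F_span sc S = U)"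

definition approx_scheme :: "('k::real_normed_field \<Rightarrow> 'a::banach \<Rightarrow> 'a) \<Rightarrow> (nat \<Rightarrow> 'a set) \<Rightarrow> bool" where
  "approx_scheme sc V \<longleftrightarrow>
     F_space sc \<and>
     \<not> F_finite_dim sc (UNIV :: 'a set) \<and>
     (\<exists>D :: 'a set. countable D \<and> closure D = UNIV) \<and>
     (\<forall>n. F_subspace sc (V n) \<and> F_finite_dim sc (V n)) \<and>
     (\<forall>n. V n \<subset> V (Suc n)) \<and>
     closure (\<Union>n. V n) = UNIV"

text \<open>The Banach space 'c with the 'k-bilinear map t (a \<otimes> b) is (isometric to) the
  completion of the algebraic tensor product A \<otimes> B under a reasonable crossnorm:
  alpha(a \<otimes> b) \<le> \<parallel>a\<parallel>\<parallel>b\<parallel>, and f \<otimes> g is bounded with norm \<le> \<parallel>f\<parallel>\<parallel>g\<parallel> for all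
  bounded functionals f, g; the image of A \<otimes> B is dense.\<close>
definition reasonable_crossnorm_completion ::
  "('k::real_normed_field \<Rightarrow> 'a::banach \<Rightarrow> 'a) \<Rightarrow> ('k \<Rightarrow> 'b::banach \<Rightarrow> 'b) \<Rightarrow>
   ('k \<Rightarrow> 'c::banach \<Rightarrow> 'c) \<Rightarrow> ('a \<Rightarrow> 'b \<Rightarrow> 'c) \<Rightarrow> bool" where
  "reasonable_crossnorm_completion scA scB scX t \<longleftrightarrow>
     F_space scA \<and> F_space scB \<and> F_space scX \<and>
     (\<forall>b. F_linear scA scX (\<lambda>a. t a b)) \<and> (\<forall>a. F_linear scB scX (t a)) \<and>
     (\<forall>a b. norm (t a b) \<le> norm a * norm b) \<and>
     (\<forall>f g K L. F_functional scA f K \<and> F_functional scB g L \<longrightarrow>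
        (\<forall>(n::nat) a b. norm (\<Sum>i<n. f (a i) * g (b i)) \<le> K * L * norm (\<Sum>i<n. t (a i) (b i)))) \<and>
     closure {(\<Sum>i<n. t (a i) (b i)) | (n::nat) a b. True} = UNIV"

definition tensor_sub :: "('a \<Rightarrow> 'b \<Rightarrow> 'c::comm_monoid_add) \<Rightarrow> (nat \<Rightarrow> 'a set) \<Rightarrow> nat \<Rightarrow> 'c set" where
  "tensor_sub t V n = {(\<Sum>i<m. t (v i) (b i)) | (m::nat) v b. \<forall>i<m. v i \<in> V n}"

definition E_approx :: "('a \<Rightarrow> 'b \<Rightarrow> 'c::{comm_monoid_add,metric_space}) \<Rightarrow> (nat \<Rightarrow> 'a set) \<Rightarrow> nat \<Rightarrow> 'c \<Rightarrow> real" where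
  "E_approx t V n x = infdist x (tensor_sub t V n)"

definition scale_function :: "(nat \<Rightarrow> real) \<Rightarrow> bool" where
  "scale_function \<phi> \<longleftrightarrow> (\<forall>m n. m \<le> n \<longrightarrow> \<phi> n \<le> \<phi> m) \<and> (\<forall>n. 0 < \<phi> n) \<and> \<phi> \<longlonglongrightarrow> 0"

definition BB :: "('a \<Rightarrow> 'b \<Rightarrow> 'c::{comm_monoid_add,metric_space}) \<Rightarrow> (nat \<Rightarrow> 'a set) \<Rightarrow> (nat \<Rightarrow> real) \<Rightarrow> 'c set" where
  "BB t V \<phi> = {x. liminf (\<lambda>n. ereal (E_approx t V n x powr \<phi> n)) < 1}"

definition F_banach_algebra :: "('k::real_normed_field \<Rightarrow> 'a::banach \<Rightarrow> 'a) \<Rightarrow> ('a \<Rightarrow> 'a \<Rightarrow> 'a) \<Rightarrow> bool" where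
  "F_banach_algebra sc mul \<longleftrightarrow>
     F_space sc \<and>
     (\<forall>x y z. mul (mul x y) z = mul x (mul y z)) \<and>
     (\<forall>y. F_linear sc sc (\<lambda>x. mul x y)) \<and> (\<forall>x. F_linear sc sc (mul x)) \<and>
     (\<forall>x y. norm (mul x y) \<le> norm x * norm y)"

definition F_unital_banach_algebra :: "('k::real_normed_field \<Rightarrow> 'a::banach \<Rightarrow> 'a) \<Rightarrow> ('a \<Rightarrow> 'a \<Rightarrow> 'a) \<Rightarrow> 'a \<Rightarrow> bool" where
  "F_unital_banach_algebra sc mul one \<longleftrightarrow>
     F_banach_algebra sc mul \<and> (\<forall>x. mul one x = x \<and> mul x one = x) \<and> norm one = 1"

end

theory Submission
  imports Defs
begin

(* Call x good if it is frequently within (1/2) powr (1 / \<phi> n) of V_n \<otimes> B; good elements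
   lie in \<B>_\<phi>(Q). Since the union of the V_n \<otimes> B over n \<ge> N is dense for every N, the good
   elements form a dense G_\<delta> set, and by Baire's theorem a dense G_\<delta> subset of a completely
   metrizable space meets its preimages under finitely many self-homeomorphisms.
   For (1) use the homeomorphism z \<mapsto> x - z of the whole space: some z has z and x - z good.
   For (2) use the group of units, which is open in a Banach algebra and on which inversion is
   continuous (Neumann series): z \<mapsto> z\<inverse>, z \<mapsto> z\<inverse>x and z \<mapsto> x\<inverse>z are homeomorphisms of it, so some unit z
   makes z, z\<inverse>, z\<inverse>x and x\<inverse>z = (z\<inverse>x)\<inverse> good, and x = z (z\<inverse>x). *)

lemma Baire_homeomorphic_preimages:
  assumes X: "completely_metrizable_space X" "topspace X \<noteq> {}"
    and \<U>: "countable \<U>" "\<And>U. U \<in> \<U> \<Longrightarrow> openin X U \<and> X closure_of U = topspace X"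
    and H: "finite H" "\<And>h. h \<in> H \<Longrightarrow> homeomorphic_map X X h"
  shows "\<exists>z\<in>topspace X. \<forall>h\<in>H. \<forall>U\<in>\<U>. h z \<in> U"
proof -
  define \<G> where "\<G> = (\<lambda>(h, U). {z \<in> topspace X. h z \<in> U}) ` (H \<times> \<U>)"
  have "openin X G \<and> X closure_of G = topspace X" if "G \<in> \<G>" for G
  proof -
    obtain h U where hU: "h \<in> H" "U \<in> \<U>" and G: "G = {z \<in> topspace X. h z \<in> U}"
      using \<open>G \<in> \<G>\<close> unfolding \<G>_def by blast
    obtain k where hk: "homeomorphic_maps X X h k"
      using H(2)[OF hU(1)] homeomorphic_map_maps by blast
    have U: "openin X U" "X closure_of U = topspace X" "U \<subseteq> topspace X"
      using \<U>(2)[OF hU(2)] openin_subset by auto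
    have "G = k ` U"
      using hk U(3) unfolding G homeomorphic_maps_def
      by (auto simp: image_iff continuous_map_def Pi_iff) metis
    moreover have "homeomorphic_map X X k"
      using hk homeomorphic_maps_imp_map homeomorphic_maps_sym by blast
    ultimately have "X closure_of G = topspace X"
      using homeomorphic_map_closure_of[of X X k U] U(2,3) homeomorphic_imp_surjective_map by metis
    moreover have "openin X G"
      unfolding G
      using openin_continuous_map_preimage[OF homeomorphic_imp_continuous_map U(1)] H(2)[OF hU(1)] .
    ultimately show ?thesis by blast
  qed
  moreover have "countable \<G>"
    unfolding \<G>_def using \<U>(1) H(1) by (simp add: countable_finite)
  ultimately have "X closure_of \<Inter>\<G> = topspace X"
    using X(1) by (intro Baire_category) auto
  then obtain z where "z \<in> topspace X" "z \<in> \<Inter>\<G>"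
    using X(2) closure_of_restrict[of X "\<Inter>\<G>"] by (metis closure_of_empty disjoint_iff)
  then show ?thesis unfolding \<G>_def by blast
qed

lemma frequently_near_common_point:
  fixes S :: "'a::complete_space set" and T :: "nat \<Rightarrow> 'a set"
  assumes S: "open S" "S \<noteq> {}" and T: "\<And>N. closure (\<Union>n\<in>{N..}. T n) = UNIV"
    and g: "\<And>n. 0 < g n"
    and H: "finite H" "\<And>h. h \<in> H \<Longrightarrow> \<exists>k. homeomorphism S S h k"
  shows "\<exists>z\<in>S. \<forall>h\<in>H. \<exists>\<^sub>F n in sequentially. infdist (h z) (T n) < g n"
proof -
  define U where "U N = S \<inter> (\<Union>n\<in>{N..}. {x. infdist x (T n) < g n})" for N
  have "openin (top_of_set S) (U N) \<and> top_of_set S closure_of U N = S" for N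
  proof
    have "open {x. infdist x (T n) < g n}" for n
      by (intro open_Collect_less continuous_on_infdist continuous_on_id continuous_on_const)
    then show "openin (top_of_set S) (U N)"
      unfolding U_def by (intro openin_open_Int open_UN) auto
    have sub: "(\<Union>n\<in>{N..}. T n) \<subseteq> (\<Union>n\<in>{N..}. {x. infdist x (T n) < g n})"
      using g by auto
    have "UNIV \<subseteq> closure (\<Union>n\<in>{N..}. {x. infdist x (T n) < g n})"
      using closure_mono[OF sub] by (simp only: T)
    then have dense: "closure (\<Union>n\<in>{N..}. {x. infdist x (T n) < g n}) = UNIV"
      by (rule top_le)
    have "S \<subseteq> closure (U N)"
      using open_Int_closure_subset[OF S(1), of "\<Union>n\<in>{N..}. {x. infdist x (T n) < g n}"]
      unfolding dense U_def by simp
    moreover have "top_of_set S closure_of U N = S \<inter> closure (U N)"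
      unfolding closure_of_subtopology U_def by (simp add: Int_assoc[symmetric])
    ultimately show "top_of_set S closure_of U N = S"
      by blast
  qed
  moreover have "homeomorphic_map (top_of_set S) (top_of_set S) h" if h: "h \<in> H" for h
  proof -
    obtain k where "homeomorphism S S h k" using H(2) h by blast
    then have "homeomorphic_maps (top_of_set S) (top_of_set S) h k"
      by (force simp: Pi_iff homeomorphic_maps_def homeomorphism_def)
    then show ?thesis using homeomorphic_maps_imp_map by blast
  qed
  moreover have "completely_metrizable_space (top_of_set S)"
    using completely_metrizable_space_openin[OF completely_metrizable_space_euclidean] S(1) by simp
  ultimately obtain z where z: "z \<in> S" "\<forall>h\<in>H. \<forall>N. h z \<in> U N"
    using Baire_homeomorphic_preimages[of "top_of_set S" "range U" H] S(2) H(1) by auto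
  have "\<exists>\<^sub>F n in sequentially. infdist (h z) (T n) < g n" if "h \<in> H" for h
    unfolding frequently_sequentially using z(2) that by (auto simp: U_def)
  with z(1) show ?thesis by blast
qed

lemma frequently_E_approx_imp_BB:
  assumes \<phi>: "\<forall>n. 0 < \<phi> n"
    and freq: "\<exists>\<^sub>F n in sequentially. E_approx t V n x < (1/2) powr (1 / \<phi> n)"
  shows "x \<in> BB t V \<phi>"
proof -
  have "E_approx t V n x powr \<phi> n < 1/2" if "E_approx t V n x < (1/2) powr (1 / \<phi> n)" for n
  proof -
    have "E_approx t V n x powr \<phi> n < ((1/2) powr (1 / \<phi> n)) powr \<phi> n"
      using that \<phi> infdist_nonneg by (intro powr_less_mono2) (auto simp: E_approx_def)
    also have "\<dots> = 1/2"
      using \<phi>[rule_format, of n] by (simp add: powr_powr)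
    finally show ?thesis .
  qed
  then have small: "\<exists>\<^sub>F n in sequentially. ereal (E_approx t V n x powr \<phi> n) < ereal (1/2)"
    using frequently_elim1[OF freq] by simp
  have "\<not> 1 \<le> liminf (\<lambda>n. ereal (E_approx t V n x powr \<phi> n))"
  proof
    assume "1 \<le> liminf (\<lambda>n. ereal (E_approx t V n x powr \<phi> n))"
    then obtain N where "\<forall>n\<ge>N. ereal (1/2) < ereal (E_approx t V n x powr \<phi> n)"
      unfolding liminf_bounded_iff
      by (metis ereal_less(3) field_sum_of_halves half_gt_zero_iff less_add_same_cancel1 zero_less_one)
    with small show False
      unfolding frequently_sequentially by (meson less_asym)
  qed
  then show ?thesis
    unfolding BB_def by (simp add: not_le)
qed

lemma approx_scheme_mono:
  assumes "approx_scheme scA V" "m \<le> n"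
  shows "V m \<subseteq> V n"
  using assms lift_Suc_mono_le[of V] unfolding approx_scheme_def by blast

lemma reasonable_crossnorm_completionD:
  assumes "reasonable_crossnorm_completion scA scB scX t"
  shows "t (a - a') b = t a b - t a' b"
    and "norm (t a b) \<le> norm a * norm b"
    and "closure {(\<Sum>i<m. t (a i) (b i)) | (m::nat) a b. True} = UNIV"
proof -
  have "t ((a - a') + a') b = t (a - a') b + t a' b"
    using assms unfolding reasonable_crossnorm_completion_def F_linear_def by blast
  then show "t (a - a') b = t a b - t a' b"
    by (simp add: eq_diff_eq)
qed (use assms in \<open>simp_all add: reasonable_crossnorm_completion_def\<close>)

lemma norm_tensor_sum_diff_le:
  assumes "reasonable_crossnorm_completion scA scB scX t"
  shows "norm ((\<Sum>i<m. t (a i) (b i)) - (\<Sum>i<m. t (a' i) (b i)))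
    \<le> (\<Sum>i<m. norm (a i - a' i) * norm (b i))"
proof -
  have "(\<Sum>i<m. t (a i) (b i)) - (\<Sum>i<m. t (a' i) (b i)) = (\<Sum>i<m. t (a i - a' i) (b i))"
    by (simp add: sum_subtractf reasonable_crossnorm_completionD(1)[OF assms])
  also have "norm \<dots> \<le> (\<Sum>i<m. norm (t (a i - a' i) (b i)))"
    by (rule norm_sum)
  also have "\<dots> \<le> (\<Sum>i<m. norm (a i - a' i) * norm (b i))"
    by (intro sum_mono reasonable_crossnorm_completionD(2)[OF assms])
  finally show ?thesis .
qed

lemma approx_scheme_common_level:
  fixes a :: "nat \<Rightarrow> 'a::banach"
  assumes AV: "approx_scheme scA V" and "\<delta> > 0"
  obtains n a' where "n \<ge> N" "\<And>i. i < m \<Longrightarrow> a' i \<in> V n \<and> dist (a' i) (a i) < \<delta>"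
proof -
  have "\<exists>k v. v \<in> V k \<and> dist v (a i) < \<delta>" for i
  proof -
    have "a i \<in> closure (\<Union>n. V n)"
      using AV unfolding approx_scheme_def by simp
    then show ?thesis
      using \<open>\<delta> > 0\<close> unfolding closure_approachable by blast
  qed
  then obtain k a' where a': "\<And>i. a' i \<in> V (k i)" "\<And>i. dist (a' i) (a i) < \<delta>"
    by metis
  show ?thesis
  proof
    show "N \<le> N + (\<Sum>i<m. k i)"
      by simp
    fix i assume "i < m"
    then have "k i \<le> N + (\<Sum>i<m. k i)"
      using member_le_sum[of i "{..<m}" k] by (simp add: trans_le_add2)
    then show "a' i \<in> V (N + (\<Sum>i<m. k i)) \<and> dist (a' i) (a i) < \<delta>"
      using a' approx_scheme_mono[OF AV] by blast
  qed
qed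

lemma closure_tensor_sub_tail:
  fixes t :: "'a::banach \<Rightarrow> 'b::banach \<Rightarrow> 'c::banach"
  assumes AV: "approx_scheme scA V" and t: "reasonable_crossnorm_completion scA scB scX t"
  shows "closure (\<Union>n\<in>{N..}. tensor_sub t V n) = UNIV"
proof -
  let ?D = "\<Union>n\<in>{N..}. tensor_sub t V n"
  have "(\<Sum>i<m. t (a i) (b i)) \<in> closure ?D" for m and a :: "nat \<Rightarrow> 'a" and b :: "nat \<Rightarrow> 'b"
  proof (unfold closure_approachable, intro allI impI)
    fix \<epsilon> :: real assume "\<epsilon> > 0"
    define \<delta> where "\<delta> = \<epsilon> / (1 + (\<Sum>i<m. norm (b i)))"
    have "0 \<le> (\<Sum>i<m. norm (b i))" by (simp add: sum_nonneg)
    then have \<delta>: "\<delta> > 0" "\<delta> * (\<Sum>i<m. norm (b i)) < \<epsilon>"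
      using \<open>\<epsilon> > 0\<close> by (auto simp: \<delta>_def field_simps)
    obtain n a' where n: "n \<ge> N" and a': "\<And>i. i < m \<Longrightarrow> a' i \<in> V n \<and> dist (a' i) (a i) < \<delta>"
      using approx_scheme_common_level[OF AV \<delta>(1), where N = N and m = m and a = a] by blast
    have "(\<Sum>i<m. t (a' i) (b i)) \<in> tensor_sub t V n"
      unfolding tensor_sub_def using a' by (intro CollectI exI[of _ m] exI[of _ a'] exI[of _ b]) simp
    then have "(\<Sum>i<m. t (a' i) (b i)) \<in> ?D"
      using n by blast
    moreover have "dist (\<Sum>i<m. t (a' i) (b i)) (\<Sum>i<m. t (a i) (b i)) < \<epsilon>"
    proof -
      have "dist (\<Sum>i<m. t (a' i) (b i)) (\<Sum>i<m. t (a i) (b i))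
          \<le> (\<Sum>i<m. norm (a' i - a i) * norm (b i))"
        unfolding dist_norm by (rule norm_tensor_sum_diff_le[OF t])
      also have "\<dots> \<le> (\<Sum>i<m. \<delta> * norm (b i))"
        using a' by (intro sum_mono mult_right_mono) (auto simp: dist_norm less_imp_le)
      finally show ?thesis
        using \<delta>(2) by (simp add: sum_distrib_left)
    qed
    ultimately show "\<exists>y\<in>?D. dist y (\<Sum>i<m. t (a i) (b i)) < \<epsilon>"
      by blast
  qed
  then have "{(\<Sum>i<m. t (a i) (b i)) | (m::nat) a b. True} \<subseteq> closure ?D"
    by blast
  then have "closure {(\<Sum>i<m. t (a i) (b i)) | (m::nat) a b. True} \<subseteq> closure ?D"
    using closure_minimal closed_closure by blast
  then show ?thesis
    using reasonable_crossnorm_completionD(3)[OF t] by auto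
qed

lemma tendsto_norm_diff_at: "((\<lambda>b. norm (b - a)) \<longlongrightarrow> 0) (at a)"
  using tendsto_ident_at[of a UNIV] by (intro tendsto_norm_zero) (simp add: LIM_zero_iff)

(* The multiplication is a parameter rather than a type class operation, because the algebra
   structure of the completed tensor product is part of the hypotheses. *)
locale unital_banach_algebra = bounded_bilinear mul
  for mul :: "'a::banach \<Rightarrow> 'a \<Rightarrow> 'a" +
  fixes e :: 'a
  assumes mul_assoc: "mul (mul x y) z = mul x (mul y z)"
    and norm_mul_le: "norm (mul x y) \<le> norm x * norm y"
    and mul_e_left [simp]: "mul e x = x"
    and mul_e_right [simp]: "mul x e = x"
    and norm_e_le: "norm e \<le> 1"
begin

definition Units :: "'a set" where
  "Units = {z. \<exists>w. mul z w = e \<and> mul w z = e}"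

definition unit_inv :: "'a \<Rightarrow> 'a" where
  "unit_inv z = (THE w. mul z w = e \<and> mul w z = e)"

lemma UnitsI: "mul z w = e \<Longrightarrow> mul w z = e \<Longrightarrow> z \<in> Units"
  unfolding Units_def by blast

lemma unit_inv_eqI:
  assumes "mul z w = e" "mul w z = e"
  shows "unit_inv z = w"
  unfolding unit_inv_def
proof (rule the_equality)
  fix w' assume "mul z w' = e \<and> mul w' z = e"
  then show "w' = w"
    by (metis assms(1) mul_assoc mul_e_left mul_e_right)
qed (use assms in blast)

lemma Units_unit_inv:
  assumes "z \<in> Units"
  shows "mul z (unit_inv z) = e" and "mul (unit_inv z) z = e"
  using assms unit_inv_eqI unfolding Units_def by auto

lemma unit_inv_in_Units: "z \<in> Units \<Longrightarrow> unit_inv z \<in> Units"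
  using UnitsI Units_unit_inv by blast

lemma unit_inv_unit_inv: "z \<in> Units \<Longrightarrow> unit_inv (unit_inv z) = z"
  using unit_inv_eqI Units_unit_inv by blast

lemma unit_inv_mul:
  assumes "z \<in> Units" "w \<in> Units"
  shows "mul z w \<in> Units" and "unit_inv (mul z w) = mul (unit_inv w) (unit_inv z)"
proof -
  have "mul (mul z w) (mul (unit_inv w) (unit_inv z)) = e"
    "mul (mul (unit_inv w) (unit_inv z)) (mul z w) = e"
    using assms by (metis mul_assoc Units_unit_inv(1) mul_e_left)
      (metis assms mul_assoc Units_unit_inv(2) mul_e_left)
  then show "mul z w \<in> Units" "unit_inv (mul z w) = mul (unit_inv w) (unit_inv z)"
    using UnitsI unit_inv_eqI by blast+
qed

lemma norm_iterated_mul_le: "norm ((mul u ^^ k) e) \<le> norm u ^ k"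
proof (induction k)
  case 0
  then show ?case using norm_e_le by simp
next
  case (Suc k)
  have "norm ((mul u ^^ Suc k) e) \<le> norm u * norm ((mul u ^^ k) e)"
    using norm_mul_le by simp
  also have "\<dots> \<le> norm u * norm u ^ k"
    using Suc by (simp add: mult_left_mono)
  finally show ?case by simp
qed

lemma iterated_mul_commute: "mul ((mul u ^^ k) e) u = mul u ((mul u ^^ k) e)"
  by (induction k) (simp_all add: mul_assoc)

lemma Neumann_series:
  assumes v: "norm v \<le> 1/2"
  obtains s where "mul (e + v) s = e" "mul s (e + v) = e" "norm (s - e) \<le> 2 * norm v"
proof -
  define p where "p k = (mul (- v) ^^ k) e" for k
  have norm_p: "norm (p k) \<le> norm v ^ k" for k
    using norm_iterated_mul_le[where u = "- v"] by (simp add: p_def)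
  have geom: "summable (\<lambda>k. norm v ^ k)"
    using v by (intro summable_geometric) simp
  then have norm_summable: "summable (\<lambda>k. norm (p k))"
    by (rule summable_comparison_test') (use norm_p in simp)
  then have summable: "summable p"
    by (rule summable_norm_cancel)
  define s where "s = suminf p"
  have tail: "s - e = (\<Sum>k. p (Suc k))"
    using suminf_split_head[OF summable] unfolding s_def by (simp add: p_def)
  have "mul v s = (\<Sum>k. mul v (p k))"
    unfolding s_def by (rule bounded_linear.suminf[OF bounded_linear_right summable])
  also have "\<dots> = (\<Sum>k. - p (Suc k))"
    by (simp add: p_def minus_left)
  also have "\<dots> = - (\<Sum>k. p (Suc k))"
    using summable summable_Suc_iff[of p] by (intro suminf_minus) blast
  finally have vs: "mul v s = e - s"
    by (simp flip: tail)
  have "mul (p k) v = mul v (p k)" for k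
    using iterated_mul_commute[where u = "- v"] by (simp add: p_def minus_left minus_right)
  then have "mul s v = mul v s"
    unfolding s_def using bounded_linear.suminf[OF bounded_linear_left summable]
      bounded_linear.suminf[OF bounded_linear_right summable] by simp
  moreover have "norm (s - e) \<le> norm v * 2"
  proof -
    have norm_summable': "summable (\<lambda>k. norm (p (Suc k)))"
      using norm_summable by (subst summable_Suc_iff)
    have "norm (s - e) \<le> (\<Sum>k. norm (p (Suc k)))"
      unfolding tail by (rule summable_norm[OF norm_summable'])
    also have "\<dots> \<le> (\<Sum>k. norm v * norm v ^ k)"
      using norm_p[of "Suc _"] by (intro suminf_le norm_summable' summable_mult[OF geom]) simp
    also have "\<dots> = norm v * (1 / (1 - norm v))"
      using v by (simp add: suminf_mult[OF geom] suminf_geometric)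
    also have "\<dots> \<le> norm v * 2"
      using v by (intro mult_left_mono) (simp_all add: field_simps)
    finally show ?thesis .
  qed
  ultimately show ?thesis
    using that[of s] vs by (simp add: add_left add_right mult.commute)
qed

lemma Units_perturbation:
  assumes a: "a \<in> Units" and small: "norm (b - a) * norm (unit_inv a) \<le> 1/2"
  shows "b \<in> Units"
    and "norm (unit_inv b - unit_inv a) \<le> 2 * (norm (unit_inv a))\<^sup>2 * norm (b - a)"
proof -
  let ?a' = "unit_inv a"
  define v where "v = mul ?a' (b - a)"
  have norm_v: "norm v \<le> norm ?a' * norm (b - a)"
    unfolding v_def by (rule norm_mul_le)
  with small obtain s where s: "mul (e + v) s = e" "mul s (e + v) = e" "norm (s - e) \<le> 2 * norm v"
    using Neumann_series by (metis mult.commute order_trans)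
  have a'b: "mul ?a' b = e + v"
    using Units_unit_inv[OF a] by (simp add: v_def diff_right)
  have b: "b = mul a (e + v)"
    by (simp flip: a'b mul_assoc add: Units_unit_inv[OF a])
  have left: "mul (mul s ?a') b = e"
    by (simp add: mul_assoc a'b s(2))
  have "mul b (mul s ?a') = mul a (mul (mul (e + v) s) ?a')"
    by (simp add: b mul_assoc)
  then have right: "mul b (mul s ?a') = e"
    using s(1) Units_unit_inv[OF a] by simp
  show "b \<in> Units"
    using UnitsI[OF right left] .
  have "norm (unit_inv b - ?a') = norm (mul (s - e) ?a')"
    by (simp add: unit_inv_eqI[OF right left] diff_left)
  also have "\<dots> \<le> norm (s - e) * norm ?a'"
    by (rule norm_mul_le)
  also have "\<dots> \<le> (2 * (norm ?a' * norm (b - a))) * norm ?a'"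
    using s(3) norm_v by (intro mult_right_mono) auto
  finally show "norm (unit_inv b - ?a') \<le> 2 * (norm ?a')\<^sup>2 * norm (b - a)"
    by (simp add: power2_eq_square mult_ac)
qed

lemma eventually_Units_near:
  assumes a: "a \<in> Units"
  shows "\<forall>\<^sub>F b in nhds a. b \<in> Units \<and>
    norm (unit_inv b - unit_inv a) \<le> 2 * (norm (unit_inv a))\<^sup>2 * norm (b - a)"
proof -
  have "\<forall>\<^sub>F b in at a. norm (b - a) * norm (unit_inv a) < 1/2"
    by (rule order_tendstoD(2)[OF tendsto_mult_left_zero[OF tendsto_norm_diff_at]]) simp
  then have "\<forall>\<^sub>F b in at a. b \<in> Units \<and>
      norm (unit_inv b - unit_inv a) \<le> 2 * (norm (unit_inv a))\<^sup>2 * norm (b - a)"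
    by (rule eventually_mono) (use Units_perturbation[OF a] less_imp_le in blast)
  then show ?thesis
    unfolding eventually_nhds_conv_at using a by simp
qed

lemma open_Units: "open Units"
proof (unfold open_subopen[of Units], intro ballI)
  fix a assume "a \<in> Units"
  then have "\<forall>\<^sub>F b in nhds a. b \<in> Units"
    using eventually_Units_near eventually_mono by fastforce
  then show "\<exists>T. open T \<and> a \<in> T \<and> T \<subseteq> Units"
    unfolding eventually_nhds by blast
qed

lemma continuous_on_unit_inv: "continuous_on Units unit_inv"
proof (intro continuous_at_imp_continuous_on ballI)
  fix a assume a: "a \<in> Units"
  have "\<forall>\<^sub>F b in at a. norm (unit_inv b - unit_inv a) \<le> 2 * (norm (unit_inv a))\<^sup>2 * norm (b - a)"
    using eventually_Units_near[OF a] unfolding eventually_nhds_conv_at by (auto elim!: eventually_mono)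
  then have "((\<lambda>b. unit_inv b - unit_inv a) \<longlongrightarrow> 0) (at a)"
    by (rule Lim_null_comparison) (intro tendsto_mult_right_zero tendsto_norm_diff_at)
  then show "isCont unit_inv a"
    unfolding isCont_def by (simp add: LIM_zero_iff)
qed

lemma homeomorphism_unit_inv: "homeomorphism Units Units unit_inv unit_inv"
  by (intro homeomorphismI continuous_on_unit_inv)
    (auto simp: unit_inv_in_Units unit_inv_unit_inv)

lemma homeomorphism_mul_left:
  assumes "y \<in> Units"
  shows "homeomorphism Units Units (mul y) (mul (unit_inv y))"
  using assms
  by (intro homeomorphismI continuous_on continuous_on_const continuous_on_id)
    (auto simp: unit_inv_mul unit_inv_in_Units Units_unit_inv simp flip: mul_assoc)

lemma homeomorphism_unit_inv_mul:
  assumes "x \<in> Units"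
  shows "homeomorphism Units Units (\<lambda>z. mul (unit_inv z) x) (\<lambda>w. mul x (unit_inv w))"
  using assms
  by (intro homeomorphismI continuous_on continuous_on_const continuous_on_unit_inv)
    (auto simp: unit_inv_mul unit_inv_in_Units unit_inv_unit_inv Units_unit_inv mul_assoc
      simp flip: mul_assoc[of _ "unit_inv _"])

lemma Units_factorization_frequently_near:
  fixes T :: "nat \<Rightarrow> 'a set"
  assumes T: "\<And>N. closure (\<Union>n\<in>{N..}. T n) = UNIV" and g: "\<And>n. 0 < g n" and x: "x \<in> Units"
  obtains x1 x2 where "x = mul x1 x2" "x1 \<in> Units" "x2 \<in> Units"
    "\<And>w. w \<in> {x1, unit_inv x1, x2, unit_inv x2} \<Longrightarrow>
      \<exists>\<^sub>F n in sequentially. infdist w (T n) < g n"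
proof -
  let ?H = "{\<lambda>z. z, unit_inv, \<lambda>z. mul (unit_inv z) x, mul (unit_inv x)}"
  have homeo: "\<exists>k. homeomorphism Units Units h k" if "h \<in> ?H" for h
  proof -
    from that consider "h = (\<lambda>z. z)" | "h = unit_inv" | "h = (\<lambda>z. mul (unit_inv z) x)"
      | "h = mul (unit_inv x)"
      by blast
    then show ?thesis
      by cases (use homeomorphism_ident homeomorphism_unit_inv homeomorphism_unit_inv_mul[OF x]
        homeomorphism_mul_left[OF unit_inv_in_Units[OF x]] in blast)+
  qed
  have "Units \<noteq> {}"
    using UnitsI[of e e] by auto
  from frequently_near_common_point[where H = ?H and g = g, OF open_Units this T g _ homeo]
  obtain z where z: "z \<in> Units"
    and near: "\<forall>h\<in>?H. \<exists>\<^sub>F n in sequentially. infdist (h z) (T n) < g n"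
    by auto
  show ?thesis
  proof
    show "x = mul z (mul (unit_inv z) x)"
      by (simp add: Units_unit_inv[OF z] flip: mul_assoc)
    show "mul (unit_inv z) x \<in> Units"
      using unit_inv_mul(1) unit_inv_in_Units x z by blast
    have "unit_inv (mul (unit_inv z) x) = mul (unit_inv x) z"
      by (simp add: unit_inv_mul(2) unit_inv_in_Units unit_inv_unit_inv x z)
    then show "\<exists>\<^sub>F n in sequentially. infdist w (T n) < g n"
      if "w \<in> {z, unit_inv z, mul (unit_inv z) x, unit_inv (mul (unit_inv z) x)}" for w
      using that near by auto
  qed (use z in blast)
qed

end


lemma F_banach_algebra_bounded_bilinear:
  assumes "F_banach_algebra sc mul"
  shows "bounded_bilinear mul"
proof
  have scaleR: "sc (of_real r) x = r *\<^sub>R x" for r x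
    using assms unfolding F_banach_algebra_def F_space_def by blast
  have lin: "F_linear sc sc (\<lambda>x. mul x y)" "F_linear sc sc (mul x)" for x y
    using assms unfolding F_banach_algebra_def by blast+
  show "mul (a + a') b = mul a b + mul a' b" "mul a (b + b') = mul a b + mul a b'" for a a' b b'
    using lin unfolding F_linear_def by blast+
  show "mul (r *\<^sub>R a) b = r *\<^sub>R mul a b" "mul a (r *\<^sub>R b) = r *\<^sub>R mul a b" for r a b
    using lin unfolding F_linear_def scaleR[symmetric] by blast+
  have "norm (mul a b) \<le> norm a * norm b * 1" for a b
    using assms unfolding F_banach_algebra_def by simp
  then show "\<exists>K. \<forall>a b. norm (mul a b) \<le> norm a * norm b * K"
    by blast
qed

lemma unital_banach_algebra_tensor:
  fixes t :: "'a::banach \<Rightarrow> 'b::banach \<Rightarrow> 'c::banach"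
  assumes t: "reasonable_crossnorm_completion scA scB scX t"
    and A: "F_unital_banach_algebra scA mulA oneA" and B: "F_unital_banach_algebra scB mulB oneB"
    and X: "F_banach_algebra scX mulX"
    and mult: "\<forall>a1 b1 a2 b2. mulX (t a1 b1) (t a2 b2) = t (mulA a1 a2) (mulB b1 b2)"
  shows "unital_banach_algebra mulX (t oneA oneB)"
proof -
  interpret bounded_bilinear mulX
    using F_banach_algebra_bounded_bilinear[OF X] .
  let ?e = "t oneA oneB"
  let ?E = "{x. mulX ?e x = x \<and> mulX x ?e = x}"
  have oneA: "mulA oneA a = a" "mulA a oneA = a" for a
    using A unfolding F_unital_banach_algebra_def by simp_all
  have oneB: "mulB oneB b = b" "mulB b oneB = b" for b
    using B unfolding F_unital_banach_algebra_def by simp_all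
  have "mulX ?e (t a b) = t a b" "mulX (t a b) ?e = t a b" for a b
    using mult by (simp_all add: oneA oneB)
  then have "(\<Sum>i<m. t (a i) (b i)) \<in> ?E" for m and a :: "nat \<Rightarrow> 'a" and b :: "nat \<Rightarrow> 'b"
    by (simp add: sum_left sum_right)
  then have "{(\<Sum>i<m. t (a i) (b i)) | (m::nat) a b. True} \<subseteq> ?E"
    by blast
  moreover have "closed ?E"
    by (intro closed_Collect_conj closed_Collect_eq continuous_on continuous_on_id continuous_on_const)
  ultimately have "closure {(\<Sum>i<m. t (a i) (b i)) | (m::nat) a b. True} \<subseteq> ?E"
    by (rule closure_minimal)
  then have "UNIV \<subseteq> ?E"
    by (simp only: reasonable_crossnorm_completionD(3)[OF t])
  then have unit: "mulX ?e x = x" "mulX x ?e = x" for x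
    by auto
  have "norm ?e \<le> norm oneA * norm oneB"
    by (rule reasonable_crossnorm_completionD(2)[OF t])
  also have "\<dots> = 1"
    using A B by (simp add: F_unital_banach_algebra_def)
  finally have "norm ?e \<le> 1" .
  moreover have "mulX (mulX x y) z = mulX x (mulX y z)" "norm (mulX x y) \<le> norm x * norm y" for x y z
    using X unfolding F_banach_algebra_def by simp_all
  ultimately show ?thesis
    using unit by unfold_locales simp_all
qed

lemma BB_sum_decomposition:
  fixes t :: "'a::banach \<Rightarrow> 'b::banach \<Rightarrow> 'c::banach"
  assumes AV: "approx_scheme scA V" and t: "reasonable_crossnorm_completion scA scB scX t"
    and \<phi>: "scale_function \<phi>"
  shows "\<exists>x1 x2. x = x1 + x2 \<and> x1 \<in> BB t V \<phi> \<and> x2 \<in> BB t V \<phi>"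
proof -
  let ?H = "{\<lambda>z. z, \<lambda>z. x - z}"
  have \<phi>_pos: "\<forall>n. 0 < \<phi> n"
    using \<phi> unfolding scale_function_def by blast
  have reflect: "homeomorphism UNIV UNIV (\<lambda>z. x - z) (\<lambda>z. x - z)"
    by (intro homeomorphismI continuous_on_diff continuous_on_const continuous_on_id) auto
  have homeo: "\<exists>k. homeomorphism UNIV UNIV h k" if "h \<in> ?H" for h
  proof -
    from that consider "h = (\<lambda>z. z)" | "h = (\<lambda>z. x - z)"
      by blast
    then show ?thesis
      by cases (use homeomorphism_ident reflect in blast)+
  qed
  from frequently_near_common_point[where H = ?H and g = "\<lambda>n. (1/2) powr (1 / \<phi> n)",
      OF open_UNIV UNIV_not_empty closure_tensor_sub_tail[OF AV t] _ _ homeo]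
  obtain z where "\<exists>\<^sub>F n in sequentially. E_approx t V n z < (1/2) powr (1 / \<phi> n)"
    "\<exists>\<^sub>F n in sequentially. E_approx t V n (x - z) < (1/2) powr (1 / \<phi> n)"
    unfolding E_approx_def by auto
  then have "z \<in> BB t V \<phi>" "x - z \<in> BB t V \<phi>"
    using frequently_E_approx_imp_BB[OF \<phi>_pos] by blast+
  then show ?thesis
    by (intro exI[of _ z] exI[of _ "x - z"]) simp
qed

lemma BB_units_factorization:
  fixes t :: "'a::banach \<Rightarrow> 'b::banach \<Rightarrow> 'c::banach"
  assumes AV: "approx_scheme scA V" and t: "reasonable_crossnorm_completion scA scB scX t"
    and \<phi>: "scale_function \<phi>"
    and A: "F_unital_banach_algebra scA mulA oneA" and B: "F_unital_banach_algebra scB mulB oneB"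
    and X: "F_banach_algebra scX mulX"
    and mult: "\<forall>a1 b1 a2 b2. mulX (t a1 b1) (t a2 b2) = t (mulA a1 a2) (mulB b1 b2)"
    and xy: "mulX x y = t oneA oneB" "mulX y x = t oneA oneB"
  shows "\<exists>x1 y1 x2 y2. x = mulX x1 x2 \<and>
    mulX x1 y1 = t oneA oneB \<and> mulX y1 x1 = t oneA oneB \<and>
    mulX x2 y2 = t oneA oneB \<and> mulX y2 x2 = t oneA oneB \<and>
    x1 \<in> BB t V \<phi> \<and> y1 \<in> BB t V \<phi> \<and> x2 \<in> BB t V \<phi> \<and> y2 \<in> BB t V \<phi>"
proof -
  interpret unital_banach_algebra mulX "t oneA oneB"
    using unital_banach_algebra_tensor[OF t A B X mult] .
  have \<phi>_pos: "\<forall>n. 0 < \<phi> n"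
    using \<phi> unfolding scale_function_def by blast
  obtain x1 x2 where x: "x = mulX x1 x2" "x1 \<in> Units" "x2 \<in> Units"
    and near: "\<And>w. w \<in> {x1, unit_inv x1, x2, unit_inv x2} \<Longrightarrow>
      \<exists>\<^sub>F n in sequentially. infdist w (tensor_sub t V n) < (1/2) powr (1 / \<phi> n)"
    using Units_factorization_frequently_near[where g = "\<lambda>n. (1/2) powr (1 / \<phi> n)",
        OF closure_tensor_sub_tail[OF AV t] _ UnitsI[OF xy]] by auto
  have "w \<in> BB t V \<phi>" if "w \<in> {x1, unit_inv x1, x2, unit_inv x2}" for w
    using near[OF that] unfolding E_approx_def[symmetric]
    by (rule frequently_E_approx_imp_BB[OF \<phi>_pos])
  then show ?thesis
    using x Units_unit_inv
    by (intro exI[of _ x1] exI[of _ "unit_inv x1"] exI[of _ x2] exI[of _ "unit_inv x2"]) simp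
qed

theorem theorem2p12:
  fixes scA :: "'k::real_normed_field \<Rightarrow> 'a::banach \<Rightarrow> 'a"
    and scB :: "'k \<Rightarrow> 'b::banach \<Rightarrow> 'b"
    and scX :: "'k \<Rightarrow> 'c::banach \<Rightarrow> 'c"
    and V :: "nat \<Rightarrow> 'a set"
    and t :: "'a \<Rightarrow> 'b \<Rightarrow> 'c"
    and \<phi> :: "nat \<Rightarrow> real"
  assumes "scalars_R_or_C TYPE('k)"
    and "approx_scheme scA V"
    and "reasonable_crossnorm_completion scA scB scX t"
    and "scale_function \<phi>"
  shows "(\<forall>x. \<exists>x1 x2. x = x1 + x2 \<and> x1 \<in> BB t V \<phi> \<and> x2 \<in> BB t V \<phi>) \<and>
    (\<forall>mulA oneA mulB oneB mulX.
       F_unital_banach_algebra scA mulA oneA \<and> F_unital_banach_algebra scB mulB oneB \<and>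
       F_banach_algebra scX mulX \<and>
       (\<forall>a1 b1 a2 b2. mulX (t a1 b1) (t a2 b2) = t (mulA a1 a2) (mulB b1 b2)) \<longrightarrow>
       (\<forall>x y. mulX x y = t oneA oneB \<and> mulX y x = t oneA oneB \<longrightarrow>
          (\<exists>x1 y1 x2 y2. x = mulX x1 x2 \<and>
             mulX x1 y1 = t oneA oneB \<and> mulX y1 x1 = t oneA oneB \<and>
             mulX x2 y2 = t oneA oneB \<and> mulX y2 x2 = t oneA oneB \<and>
             x1 \<in> BB t V \<phi> \<and> y1 \<in> BB t V \<phi> \<and> x2 \<in> BB t V \<phi> \<and> y2 \<in> BB t V \<phi>)))"
  using BB_sum_decomposition[OF assms(2-4)] BB_units_factorization[OF assms(2-4)] by blast

end
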